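(* In the setting below, if $g(x)$ is self-reciprocal and $\gcd(t_{22}(x),g_{12}(x))=1$, then $$\gcd\big(g_{11}'(x),\ g_{11}(x)\bar g_{11}(x)+g_{12}(x)\bar g_{12}(x)\big)=1.$$
   Context: Let $q$ be a prime power, $F=\mathbb{F}_q$, $m\ge1$ with $\gcd(q,m)=1$. For a nonzero polynomial $f$ of degree $k$, $f^*(x)=x^kf(x^{-1})$; $f$ is self-reciprocal if $f^*=\alpha f$ for some $\alpha\in F$. For a polynomial $f$ of degree at most $m$, $\bar f(x)=x^m f(x^{-1})$. Let $g_{11},g_{12}\in F[x]$ with $g_{11}\mid x^m-1$ and $\deg g_{12}<m$. Let $g=\gcd(g_{11},g_{12})$, $g_{11}=g\,g_{11}'$, $g_{22}=(x^m-1)/g_{11}'$, $g_{22}=g\,g_{22}'$, $r_{22}=\gcd(g_{22}',g_{22}'^* )$, $t_{22}=g_{22}'/r_{22}$. *)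

theory Defs
  imports "HOL-Computational_Algebra.Computational_Algebra"
begin

text \<open>Reciprocal f^*(x) = x^(deg f) f(1/x): this is the library's reflect_poly.
  Self-reciprocal: f nonzero and f^* = alpha f for some alpha in F.\<close>
definition self_reciprocal :: "'a::field poly \<Rightarrow> bool" where
  "self_reciprocal f \<longleftrightarrow> f \<noteq> 0 \<and> (\<exists>\<alpha>. reflect_poly f = smult \<alpha> f)"

text \<open>bar f(x) = x^m f(1/x) for deg f \<le> m.\<close>
definition bar_poly :: "nat \<Rightarrow> 'a::field poly \<Rightarrow> 'a poly" where
  "bar_poly m f = monom 1 (m - degree f) * reflect_poly f"

end

(* Since char F does not divide m, X = x^m - 1 is squarefree, so its factors g11', g and g22'
   (X = g11' g g22') are pairwise coprime, and X is self-reciprocal, so reflection permutes the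
   irreducible factors of X. Let p be an irreducible common factor of g11' and
   g11 bar g11 + g12 bar g12. Then p divides g12 bar g12 but not g12 (it would divide g), and not
   a power of x, hence p divides the reciprocal of g12 and P = p^* divides g12 and X. Now P lies in
   none of the three factors: in g11' it would divide g; in g its reciprocal p would divide the
   self-reciprocal g; in g22' it avoids t22 (coprime to g12), so it divides r22, hence the
   reciprocal of g22', and then p divides g22'. *)

theory Submission
  imports Defs
begin

lemma of_nat_card_UNIV_eq_0: "of_nat (card (UNIV :: 'a::{finite,comm_ring_1} set)) = (0::'a)"
proof -
  \<comment> \<open>translation by 1 permutes the ring, so adding 1 to every element leaves the total sum fixed\<close>
  have "(\<Sum>x\<in>UNIV. x + (1::'a)) = (\<Sum>x\<in>UNIV. x)"
    by (rule sum.reindex_bij_witness[where i="\<lambda>x. x - 1" and j="\<lambda>x. x + 1"]) auto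
  then show ?thesis by (simp add: sum.distrib)
qed

lemma of_nat_neq_0_if_coprime_card:
  assumes "coprime (card (UNIV :: 'a::{finite,field} set)) m"
  shows "of_nat m \<noteq> (0::'a)"
proof
  assume "of_nat m = (0::'a)"
  then have "CHAR('a) dvd m" by (simp add: of_nat_eq_0_iff_char_dvd)
  moreover have "CHAR('a) dvd card (UNIV :: 'a set)"
    by (simp add: of_nat_eq_0_iff_char_dvd[symmetric] of_nat_card_UNIV_eq_0)
  ultimately have "CHAR('a) dvd gcd (card (UNIV :: 'a set)) m" by simp
  with assms show False by simp
qed

lemma dvd_pderiv_if_square_dvd:
  fixes p f :: "'a::idom poly"
  assumes "p ^ 2 dvd f"
  shows "p dvd pderiv f"
proof -
  from assms obtain r where "f = p ^ 2 * r" by (rule dvdE)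
  then show ?thesis by (simp add: pderiv_mult power2_eq_square)
qed

lemma squarefree_monom_minus_1:
  assumes "of_nat m \<noteq> (0::'a::field_gcd)"
  shows "squarefree (monom (1::'a) m - 1)"
proof (rule squarefreeI)
  fix p :: "'a poly"
  assume sq: "p ^ 2 dvd monom 1 m - 1"
  from assms have "m \<noteq> 0" by (cases m) auto
  \<comment> \<open>x X' = m x^m, so a repeated factor of X divides both x^m and X\<close>
  have "[:0, 1:] * pderiv (monom (1::'a) m - 1) = [:0, 1:] * monom (of_nat m) (m - 1)"
    by (simp add: pderiv_diff pderiv_monom)
  also from \<open>m \<noteq> 0\<close> have "\<dots> = smult (of_nat m) (monom 1 m)"
    by (cases m) (simp_all add: monom_Suc smult_monom)
  finally have x_deriv: "[:0, 1:] * pderiv (monom 1 m - 1) = smult (of_nat m) (monom (1::'a) m)" .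
  have "p dvd [:0, 1:] * pderiv (monom 1 m - 1)"
    using sq by (intro dvd_mult dvd_pderiv_if_square_dvd)
  then have "p dvd monom 1 m"
    using assms x_deriv by (metis dvd_smult_cancel)
  moreover from sq have "p dvd monom 1 m - 1" by (rule dvd_trans[rotated]) simp
  ultimately have "p dvd monom 1 m - (monom 1 m - 1)" by (rule dvd_diff)
  then show "p dvd 1" by simp
qed

lemma self_reciprocal_monom_minus_1:
  assumes "m \<ge> 1"
  shows "self_reciprocal (monom (1::'a::field) m - 1)"
proof -
  have "monom (1::'a) m - 1 = monom 1 m + (- 1)" by simp
  also have "degree \<dots> = m"
    using assms by (subst degree_add_eq_left) (auto simp: degree_monom_eq)
  finally have deg: "degree (monom (1::'a) m - 1) = m" .
  then have "reflect_poly (monom (1::'a) m - 1) = smult (- 1) (monom 1 m - 1)"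
    using assms by (intro poly_eqI) (auto simp: coeff_reflect_poly)
  moreover from deg assms have "monom (1::'a) m - 1 \<noteq> 0" by auto
  ultimately show ?thesis unfolding self_reciprocal_def by blast
qed

lemma coeff_0_neq_0_if_self_reciprocal:
  assumes "self_reciprocal f"
  shows "coeff f 0 \<noteq> 0"
proof
  assume "coeff f 0 = 0"
  moreover from assms obtain \<alpha> where "reflect_poly f = smult \<alpha> f" and "f \<noteq> 0"
    by (auto simp: self_reciprocal_def)
  ultimately have "lead_coeff f = 0" by (metis coeff_0_reflect_poly coeff_smult mult_zero_right)
  with \<open>f \<noteq> 0\<close> show False by simp
qed

lemma coeff_0_neq_0_if_dvd:
  fixes p f :: "'a::idom poly"
  assumes "p dvd f" "coeff f 0 \<noteq> 0"
  shows "coeff p 0 \<noteq> 0"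
  using assms by (auto simp: coeff_mult_0)

lemma reflect_poly_dvd_reflect_poly:
  fixes p q :: "'a::idom poly"
  shows "p dvd q \<Longrightarrow> reflect_poly p dvd reflect_poly q"
  by (auto simp: reflect_poly_mult)

lemma reflect_poly_reflect_poly_dvd: "reflect_poly (reflect_poly f) dvd (f :: 'a::field poly)"
proof (cases "f = 0")
  case False
  \<comment> \<open>reflecting twice only strips the power of x that divides f\<close>
  obtain q where q: "f = [:0, 1:] ^ order 0 f * q" "\<not> [:0, 1:] dvd q"
    using order_decomp[OF False, of 0] by auto
  then have "coeff q 0 \<noteq> 0" by (simp add: dvd_iff_poly_eq_0 poly_0_coeff_0)
  moreover have "reflect_poly [:0, 1::'a:] = 1" by (simp add: reflect_poly_def)
  then have "reflect_poly f = reflect_poly q"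
    by (subst q(1)) (simp add: reflect_poly_mult reflect_poly_power)
  ultimately show ?thesis by (subst q(1)) simp
qed simp

lemma reflect_poly_dvd_if_dvd_reflect_poly:
  fixes p q :: "'a::field poly"
  assumes "p dvd reflect_poly q"
  shows "reflect_poly p dvd q"
  using reflect_poly_dvd_reflect_poly[OF assms] reflect_poly_reflect_poly_dvd by (rule dvd_trans)

lemma reflect_poly_dvd_if_self_reciprocal:
  assumes "self_reciprocal f" "p dvd f"
  shows "reflect_poly p dvd f"
proof -
  from assms(1) obtain \<alpha> where "reflect_poly f = smult \<alpha> f" "f \<noteq> 0"
    by (auto simp: self_reciprocal_def)
  moreover from this have "\<alpha> \<noteq> 0" by auto
  ultimately show ?thesis
    using reflect_poly_dvd_reflect_poly[OF assms(2)] by (metis dvd_smult_cancel)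
qed

lemma is_unit_reflect_poly_iff:
  fixes p :: "'a::field poly"
  assumes "coeff p 0 \<noteq> 0"
  shows "is_unit (reflect_poly p) \<longleftrightarrow> is_unit p"
proof -
  from assms have "p \<noteq> 0" by auto
  with assms show ?thesis by (simp add: is_unit_iff_degree)
qed

lemma prime_elem_reflect_poly:
  fixes p :: "'a::field_gcd poly"
  assumes "prime_elem p" "coeff p 0 \<noteq> 0"
  shows "prime_elem (reflect_poly p)"
proof -
  have irr: "irreducible p" using assms(1) by (simp add: prime_elem_iff_irreducible)
  have "p \<noteq> 0" "\<not> is_unit p" using assms(1) by (auto simp: prime_elem_def)
  have "irreducible (reflect_poly p)"
  proof (rule irreducibleI)
    from \<open>p \<noteq> 0\<close> \<open>\<not> is_unit p\<close> show "reflect_poly p \<noteq> 0" "\<not> is_unit (reflect_poly p)"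
      using assms(2) by (simp_all add: is_unit_reflect_poly_iff)
  next
    fix a b assume ab: "reflect_poly p = a * b"
    then have "coeff a 0 * coeff b 0 \<noteq> 0"
      using \<open>p \<noteq> 0\<close> by (metis coeff_0_reflect_poly coeff_mult_0 leading_coeff_0_iff)
    then have coeffs: "coeff a 0 \<noteq> 0" "coeff b 0 \<noteq> 0" by auto
    from ab have "p = reflect_poly a * reflect_poly b"
      using assms(2) by (metis reflect_poly_mult reflect_poly_reflect_poly)
    with irr have "is_unit (reflect_poly a) \<or> is_unit (reflect_poly b)"
      by (rule irreducibleD)
    with coeffs show "is_unit a \<or> is_unit b"
      by (simp add: is_unit_reflect_poly_iff)
  qed
  then show ?thesis by (simp add: prime_elem_iff_irreducible)
qed

lemma coprime_if_mult_dvd_squarefree: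
  assumes "squarefree c" "a * b dvd c"
  shows "coprime a b"
proof (rule coprimeI)
  fix d assume "d dvd a" "d dvd b"
  then have "d ^ 2 dvd a * b" by (simp add: power2_eq_square mult_dvd_mono)
  then have "d ^ 2 dvd c" using assms(2) by (rule dvd_trans)
  with assms(1) show "is_unit d" by (rule squarefreeD)
qed

lemma coprime_monom_if_coeff_0_neq_0:
  fixes f :: "'a::field_gcd poly"
  assumes "coeff f 0 \<noteq> 0"
  shows "coprime (monom 1 k) f"
proof -
  have "\<not> [:0, 1:] dvd f" using assms by (simp add: dvd_iff_poly_eq_0 poly_0_coeff_0)
  then have "coprime [:0, 1:] f"
    by (intro prime_elem_imp_coprime prime_elem_linear_field_poly) simp_all
  then show ?thesis by (simp add: monom_altdef)
qed

lemma coprime_if_no_common_prime_divisor: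
  fixes a b :: "'a::factorial_semiring"
  assumes "a \<noteq> 0" "\<And>p. prime p \<Longrightarrow> p dvd a \<Longrightarrow> p dvd b \<Longrightarrow> False"
  shows "coprime a b"
proof (rule coprimeI)
  fix d assume "d dvd a" "d dvd b"
  show "is_unit d"
  proof (rule ccontr)
    assume "\<not> is_unit d"
    moreover from \<open>d dvd a\<close> assms(1) have "d \<noteq> 0" by auto
    ultimately obtain p where "p dvd d" "prime p" using prime_divisor_exists by blast
    with \<open>d dvd a\<close> \<open>d dvd b\<close> assms(2) show False using dvd_trans by blast
  qed
qed

lemma factor_through_dvd_chain:
  fixes g h x :: "'a::idom_divide"
  assumes "g dvd h" "h dvd x"
  shows "x = h div g * g * (x div (h div g) div g)"
proof (cases "h = 0")
  case False
  obtain h' where h': "h = g * h'" using assms(1) by (rule dvdE)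
  obtain k where "x = h * k" using assms(2) by (rule dvdE)
  with h' have k: "x = h' * (g * k)" by (simp add: ac_simps)
  from False h' have "g \<noteq> 0" "h' \<noteq> 0" by auto
  with h' k have "h div g = h'" "x div h' = g * k" "g * k div g = k" by simp_all
  then show ?thesis using k by (simp add: mult.assoc)
qed (use assms in auto)

lemma not_coprime_if_prime_elem_dvd:
  "prime_elem p \<Longrightarrow> p dvd a \<Longrightarrow> p dvd b \<Longrightarrow> \<not> coprime a b"
  by (meson coprime_common_divisor prime_elem_not_unit)

lemma prime_elem_dvd_reflect_poly_if_dvd_bar_poly:
  fixes p f :: "'a::field_gcd poly"
  assumes "prime_elem p" "coeff p 0 \<noteq> 0" "p dvd bar_poly m f"
  shows "p dvd reflect_poly f"
proof -
  have "coprime (monom 1 (m - degree f)) p" using assms(2) by (rule coprime_monom_if_coeff_0_neq_0)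
  then have "\<not> p dvd monom 1 (m - degree f)"
    using not_coprime_if_prime_elem_dvd[OF assms(1) _ dvd_refl] by blast
  moreover have "p dvd monom 1 (m - degree f) * reflect_poly f"
    using assms(3) by (simp add: bar_poly_def)
  ultimately show ?thesis using assms(1) by (simp add: prime_elem_dvd_mult_iff)
qed

lemma prime_elem_not_dvd_reflect_poly:
  fixes a g b c p :: "'a::field_gcd poly"
  assumes F: "self_reciprocal (a * g * b)" "squarefree (a * g * b)"
    and g: "self_reciprocal g" "gcd (g * a) c = g"
    and bc: "coprime (b div gcd b (reflect_poly b)) c"
    and p: "prime_elem p" "p dvd a"
  shows "\<not> p dvd reflect_poly c"
proof
  assume "p dvd reflect_poly c"
  define P where "P = reflect_poly p"
  have "coprime a g" "coprime a b"
    using F(2) by (auto intro: coprime_if_mult_dvd_squarefree simp: ac_simps)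
  have pF: "p dvd a * g * b" using p(2) by simp
  then have "coeff p 0 \<noteq> 0"
    using coeff_0_neq_0_if_dvd coeff_0_neq_0_if_self_reciprocal[OF F(1)] by blast
  then have P: "prime_elem P" "reflect_poly P = p"
    using p(1) by (simp_all add: P_def prime_elem_reflect_poly)
  have Pc: "P dvd c"
    unfolding P_def using \<open>p dvd reflect_poly c\<close> by (rule reflect_poly_dvd_if_dvd_reflect_poly)
  have "\<not> P dvd a"
  proof
    assume "P dvd a"
    with Pc have "P dvd gcd (g * a) c" by simp
    with g(2) have "P dvd g" by simp
    with P(1) \<open>P dvd a\<close> \<open>coprime a g\<close> show False
      using not_coprime_if_prime_elem_dvd by blast
  qed
  moreover have "\<not> P dvd g"
  proof
    assume "P dvd g"
    with g(1) have "reflect_poly P dvd g" by (rule reflect_poly_dvd_if_self_reciprocal)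
    with P(2) have "p dvd g" by simp
    with p \<open>coprime a g\<close> show False using not_coprime_if_prime_elem_dvd by blast
  qed
  moreover have "\<not> P dvd b"
  proof
    assume "P dvd b"
    define r where "r = gcd b (reflect_poly b)"
    have "\<not> P dvd b div r"
      using bc Pc P(1) not_coprime_if_prime_elem_dvd unfolding r_def by blast
    moreover have "P dvd b div r * r" using \<open>P dvd b\<close> by (simp add: r_def)
    ultimately have "P dvd r" using P(1) by (simp add: prime_elem_dvd_mult_iff)
    then have "P dvd reflect_poly b" unfolding r_def by (rule dvd_trans) simp
    then have "reflect_poly P dvd b" by (rule reflect_poly_dvd_if_dvd_reflect_poly)
    with P(2) have "p dvd b" by simp
    with p \<open>coprime a b\<close> show False using not_coprime_if_prime_elem_dvd by blast
  qed
  moreover have "P dvd a * g * b"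
    unfolding P_def using F(1) pF by (rule reflect_poly_dvd_if_self_reciprocal)
  ultimately show False using P(1) by (simp add: prime_elem_dvd_mult_iff)
qed

lemma prime_elem_not_dvd_mult_bar_poly:
  fixes a g b c p :: "'a::field_gcd poly"
  assumes F: "self_reciprocal (a * g * b)" "squarefree (a * g * b)"
    and g: "self_reciprocal g" "gcd (g * a) c = g"
    and bc: "coprime (b div gcd b (reflect_poly b)) c"
    and p: "prime_elem p" "p dvd a"
  shows "\<not> p dvd c * bar_poly k c"
proof -
  have "\<not> p dvd c"
  proof
    assume "p dvd c"
    with p(2) have "p dvd gcd (g * a) c" by simp
    with g(2) have "p dvd g" by simp
    moreover have "coprime a g"
      using F(2) by (rule coprime_if_mult_dvd_squarefree) (simp add: ac_simps)
    ultimately show False using p not_coprime_if_prime_elem_dvd by blast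
  qed
  moreover have "\<not> p dvd bar_poly k c"
  proof -
    have "p dvd a * g * b" using p(2) by simp
    then have "coeff p 0 \<noteq> 0"
      by (rule coeff_0_neq_0_if_dvd) (rule coeff_0_neq_0_if_self_reciprocal[OF F(1)])
    then show ?thesis
      using prime_elem_not_dvd_reflect_poly[OF assms] prime_elem_dvd_reflect_poly_if_dvd_bar_poly[OF p(1)]
      by blast
  qed
  ultimately show ?thesis using p(1) by (simp add: prime_elem_dvd_mult_iff)
qed

theorem lemma4p2:
  fixes g11 g12 :: "'a::{field_gcd, finite} poly" and m :: nat
  assumes "m \<ge> 1"
    and "coprime (card (UNIV :: 'a set)) m"
    and "g11 dvd (monom 1 m - 1)"
    and "degree g12 < m"
  defines "g \<equiv> gcd g11 g12"
  defines "g11' \<equiv> g11 div g"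
  defines "g22 \<equiv> (monom 1 m - 1) div g11'"
  defines "g22' \<equiv> g22 div g"
  defines "r22 \<equiv> gcd g22' (reflect_poly g22')"
  defines "t22 \<equiv> g22' div r22"
  assumes "self_reciprocal g"
    and "gcd t22 g12 = 1"
  shows "gcd g11' (g11 * bar_poly m g11 + g12 * bar_poly m g12) = 1"
proof -
  define X :: "'a poly" where "X = monom 1 m - 1"
  have X_eq: "X = g11' * g * g22'"
    unfolding X_def g11'_def g22'_def g22_def g_def
    by (rule factor_through_dvd_chain[OF gcd_dvd1 assms(3)])
  have "self_reciprocal X" "squarefree X" unfolding X_def
    by (fact self_reciprocal_monom_minus_1[OF assms(1)])
      (fact squarefree_monom_minus_1[OF of_nat_neq_0_if_coprime_card[OF assms(2)]])
  then have X: "self_reciprocal (g11' * g * g22')" "squarefree (g11' * g * g22')"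
    by (simp_all only: X_eq)
  have g11_eq: "g11 = g * g11'" unfolding g11'_def g_def by simp
  have gcd_eq: "gcd (g * g11') g12 = g" by (subst g11_eq[symmetric]) (simp add: g_def)
  have coprime_t22: "coprime (g22' div gcd g22' (reflect_poly g22')) g12"
    using assms(12) by (simp add: t22_def r22_def coprime_iff_gcd_eq_1)
  have "coprime g11' (g11 * bar_poly m g11 + g12 * bar_poly m g12)"
  proof (rule coprime_if_no_common_prime_divisor)
    show "g11' \<noteq> 0" using X(2) by auto
  next
    fix p assume p: "prime p" "p dvd g11'" "p dvd g11 * bar_poly m g11 + g12 * bar_poly m g12"
    then have "p dvd g12 * bar_poly m g12" by (simp add: g11_eq dvd_add_right_iff)
    with p(1,2) show False
      using prime_elem_not_dvd_mult_bar_poly[OF X assms(11) gcd_eq coprime_t22] by blast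
  qed
  then show ?thesis by (simp add: coprime_iff_gcd_eq_1)
qed

end
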